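(* Let $\chi=\chi_D$ be an exceptional (real, non-principal) Dirichlet character modulo $D$, let $q\ge1$ and let $a$ be an integer with $(a,q)=1$. Then $$\psi(x,q,a)\le S_W'(x,q,a)+O\left(R\log^2 x\right),$$ where $S_W'(x,q,a)=\sum_{n\le x,\ n\equiv a\ (\mathrm{mod}\ q)}\lambda'_W(n)$.
   Context: $\psi(x,q,a)=\sum_{n\le x,\ n\equiv a\ (\mathrm{mod}\ q)}\Lambda(n)$ with $\Lambda$ the von Mangoldt function. $\lambda'=\chi\ast\log$, i.e. $\lambda'(n)=\sum_{d\mid n}\chi(d)\log(n/d)$. $R=\max\{D^5,\ x e^{-(\log x)^{1/2}}\}$. $P(n)$ is the smallest prime divisor of $n$, and $\lambda'_W(n)=\lambda'(n)\mathbf 1_{P(n)>R}\,\mu(n)^2$ with $\mu$ the Möbius function. *)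

theory Defs
  imports "HOL-Analysis.Analysis" "HOL-Number_Theory.Number_Theory" "HOL-Computational_Algebra.Squarefree"
begin

definition real_dirichlet_char :: "nat \<Rightarrow> (nat \<Rightarrow> real) \<Rightarrow> bool" where
  "real_dirichlet_char D chi \<longleftrightarrow> D \<ge> 1 \<and>
     (\<forall>m n. chi (m * n) = chi m * chi n) \<and>
     (\<forall>n. chi (n + D) = chi n) \<and>
     (\<forall>n. chi n = 0 \<longleftrightarrow> \<not> coprime n D) \<and> chi 1 = 1"

definition nonprincipal :: "nat \<Rightarrow> (nat \<Rightarrow> real) \<Rightarrow> bool" where
  "nonprincipal D chi \<longleftrightarrow> (\<exists>n. coprime n D \<and> chi n \<noteq> 1)"

text \<open>L(s,chi) for real s in (0,1), via the (conditionally convergent) Dirichlet series.\<close>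
definition L_real :: "(nat \<Rightarrow> real) \<Rightarrow> real \<Rightarrow> real" where
  "L_real chi s = lim (\<lambda>N. \<Sum>n=1..N. chi n / real n powr s)"

definition exceptional :: "real \<Rightarrow> nat \<Rightarrow> (nat \<Rightarrow> real) \<Rightarrow> bool" where
  "exceptional c D chi \<longleftrightarrow> real_dirichlet_char D chi \<and> nonprincipal D chi \<and>
     (\<exists>\<beta>. 1 - c / ln (real D) < \<beta> \<and> \<beta> < 1 \<and> L_real chi \<beta> = 0)"

definition psi_ap :: "real \<Rightarrow> nat \<Rightarrow> int \<Rightarrow> real" where
  "psi_ap x q a = (\<Sum>n\<in>{n. 1 \<le> n \<and> real n \<le> x \<and> [int n = a] (mod int q)}. mangoldt n)"

definition lambda' :: "(nat \<Rightarrow> real) \<Rightarrow> nat \<Rightarrow> real" where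
  "lambda' chi n = (\<Sum>d | d dvd n. chi d * ln (real n / real d))"

text \<open>P(n) > R, i.e. every prime divisor of n exceeds R (vacuous for n = 1).\<close>
definition spf_gt :: "nat \<Rightarrow> real \<Rightarrow> bool" where
  "spf_gt n R \<longleftrightarrow> (\<forall>p. prime p \<and> p dvd n \<longrightarrow> real p > R)"

definition lambda'_W :: "(nat \<Rightarrow> real) \<Rightarrow> real \<Rightarrow> nat \<Rightarrow> real" where
  "lambda'_W chi R n = (if spf_gt n R \<and> squarefree n then lambda' chi n else 0)"

definition R_param :: "nat \<Rightarrow> real \<Rightarrow> real" where
  "R_param D x = max (real D ^ 5) (x * exp (- sqrt (ln x)))"

definition S'_W :: "(nat \<Rightarrow> real) \<Rightarrow> nat \<Rightarrow> real \<Rightarrow> nat \<Rightarrow> int \<Rightarrow> real" where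
  "S'_W chi D x q a = (\<Sum>n\<in>{n. 1 \<le> n \<and> real n \<le> x \<and> [int n = a] (mod int q)}.
      lambda'_W chi (R_param D x) n)"

end

theory Submission
  imports Defs
begin

text \<open>The sifting level is large: \<open>R \<ge> D\<^sup>5 \<ge> 32\<close>, and \<open>x exp (-\<surd>(log x)) \<ge> \<surd>x\<close> as soon
  as \<open>log x \<ge> 4\<close>, so always \<open>x \<le> R\<^sup>2\<close>. Hence an integer \<open>1 < n \<le> x\<close> all of whose prime
  factors exceed \<open>R\<close> is a prime, and \<open>\<lambda>'\<^sub>W\<close> is just \<open>log p\<close> on the primes \<open>p \<in> (R, x]\<close>.
  The von Mangoldt function exceeds this only on the prime powers \<open>p\<^sup>k \<le> x\<close> with
  \<open>p \<le> R\<close>; there are at most \<open>R log\<^sub>2 x\<close> of them, each of weight at most \<open>log x\<close>.\<close>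

lemma real_dirichlet_char_modulus_ge_2:
  assumes "real_dirichlet_char D chi" "nonprincipal D chi"
  shows "D \<ge> 2"
proof (rule ccontr)
  assume "\<not> D \<ge> 2"
  with assms(1) have "D = 1"
    by (simp add: real_dirichlet_char_def)
  with assms(1) have periodic: "chi (n + 1) = chi n" for n
    unfolding real_dirichlet_char_def by blast
  have "chi 1 = 1"
    using assms(1) by (simp add: real_dirichlet_char_def)
  have "chi n = chi 1" for n
    by (induction n) (use periodic[of 0] periodic in simp_all)
  then have "chi n = 1" for n
    using \<open>chi 1 = 1\<close> by simp
  with assms(2) show False
    by (simp add: nonprincipal_def)
qed

lemma R_param_ge_32:
  assumes "D \<ge> 2"
  shows "R_param D x \<ge> 32"
proof -
  have "(2::real) ^ 5 \<le> real D ^ 5"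
    using assms by (intro power_mono) auto
  then show ?thesis
    by (simp add: R_param_def)
qed

lemma le_R_param_squared:
  assumes "D \<ge> 2"
  shows "x \<le> (R_param D x)\<^sup>2"
proof (cases "x > 0 \<and> ln x \<ge> 4")
  case True
  define t where "t = ln x"
  have x: "x = exp t"
    using True by (simp add: t_def)
  have "2 \<le> sqrt t"
    using True real_sqrt_le_mono[of 4 t] by (simp add: t_def)
  moreover have "0 \<le> sqrt t"
    using \<open>2 \<le> sqrt t\<close> by linarith
  ultimately have "2 * sqrt t \<le> sqrt t * sqrt t"
    by (rule mult_right_mono)
  moreover have "sqrt t * sqrt t = t"
    using \<open>0 \<le> sqrt t\<close> by simp
  ultimately have "t \<le> 2 * t - 2 * sqrt t"
    by linarith
  then have "x \<le> exp (2 * t - 2 * sqrt t)"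
    by (simp add: x)
  also have "\<dots> = (x * exp (- sqrt (ln x)))\<^sup>2"
    by (simp add: x t_def[symmetric] power2_eq_square exp_diff exp_add[symmetric])
  also have "\<dots> \<le> (R_param D x)\<^sup>2"
    using True by (intro power_mono) (auto simp: R_param_def)
  finally show ?thesis .
next
  case False
  have "x \<le> exp 4"
  proof (cases "x > 0")
    case True
    then show ?thesis
      using False by (metis exp_ln exp_le_cancel_iff linorder_not_le less_imp_le)
  qed (use exp_ge_zero[of 4] in linarith)
  also have "exp (4::real) = exp 1 ^ 4"
    by (simp add: exp_of_nat_mult[symmetric])
  also have "\<dots> \<le> 32\<^sup>2"
    using exp_le power_mono[of "exp 1" "3::real" 4] by simp
  also have "\<dots> \<le> (R_param D x)\<^sup>2"
    using R_param_ge_32[OF assms] by (intro power_mono) auto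
  finally show ?thesis .
qed

lemma spf_gt_prime_iff:
  assumes "prime p"
  shows "spf_gt p R \<longleftrightarrow> R < real p"
  using assms by (auto simp: spf_gt_def dest: primes_dvd_imp_eq)

lemma prime_if_spf_gt_and_le_square:
  assumes "spf_gt n R" "0 \<le> R" "real n \<le> R\<^sup>2" "n > 1"
  shows "prime n"
proof (rule ccontr)
  assume not_prime: "\<not> prime n"
  obtain p where p: "prime p" "p dvd n"
    using assms(4) prime_factor_nat[of n] by auto
  then obtain m where m: "n = p * m"
    by (auto elim: dvdE)
  have "m \<noteq> 1"
    using m p(1) not_prime by auto
  moreover have "m \<noteq> 0"
    using m assms(4) by (cases m) auto
  ultimately obtain p' where p': "prime p'" "p' dvd m"
    using prime_factor_nat by blast
  then have "p' dvd n"
    by (simp add: m)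
  have "R < real p" "R < real p'"
    using assms(1) p p' \<open>p' dvd n\<close> by (simp_all add: spf_gt_def)
  then have "R * R < real p * real p'"
    using assms(2) by (intro mult_strict_mono) auto
  moreover have "p' \<le> m"
    using p' \<open>m \<noteq> 0\<close> by (simp add: dvd_imp_le)
  then have "p * p' \<le> n"
    by (simp add: m)
  then have "real p * real p' \<le> real n"
    by (metis of_nat_le_iff of_nat_mult)
  ultimately show False
    using assms(3) by (simp add: power2_eq_square)
qed

lemma lambda'_one: "chi 1 = 1 \<Longrightarrow> lambda' chi 1 = 0"
  by (simp add: lambda'_def)

lemma lambda'_prime:
  assumes "prime p" "chi 1 = 1"
  shows "lambda' chi p = ln (real p)"
proof -
  have "{d. d dvd p} = {1, p}" "p \<noteq> 1"
    using assms(1) prime_nat_iff by auto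
  then show ?thesis
    using assms(2) by (simp add: lambda'_def)
qed

lemma lambda'_W_below_square:
  assumes "0 \<le> R" "real n \<le> R\<^sup>2" "n \<ge> 1" "chi 1 = 1"
  shows "lambda'_W chi R n = (if prime n \<and> R < real n then ln (real n) else 0)"
proof (cases "n = 1")
  case True
  then show ?thesis
    using lambda'_one[of chi, OF assms(4)] by (simp add: lambda'_W_def spf_gt_def)
next
  case False
  then have "spf_gt n R \<and> squarefree n \<longleftrightarrow> prime n \<and> R < real n"
    using assms prime_if_spf_gt_and_le_square[of n R]
    by (auto simp: spf_gt_prime_iff squarefree_prime)
  then show ?thesis
    using assms(4) by (simp add: lambda'_W_def lambda'_prime)
qed

lemma prime_power_le_square_exponent_eq_1:
  assumes "prime p" "k > 0" "0 \<le> R" "R < real p" "real (p ^ k) \<le> R\<^sup>2"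
  shows "k = 1"
proof (rule ccontr)
  assume "k \<noteq> 1"
  then have "p ^ 2 \<le> p ^ k"
    using assms(1,2) prime_ge_1_nat by (intro power_increasing) auto
  then have "real p ^ 2 \<le> real (p ^ k)"
    by (metis of_nat_le_iff of_nat_power)
  moreover have "R\<^sup>2 < real p ^ 2"
    using assms(3,4) by (intro power_strict_mono) auto
  ultimately show False
    using assms(5) by linarith
qed

definition small_prime_powers :: "real \<Rightarrow> real \<Rightarrow> nat set" where
  "small_prime_powers R x =
     {p ^ k | p k. prime p \<and> k > 0 \<and> real p \<le> R \<and> real (p ^ k) \<le> x}"

lemma mangoldt_le_lambda'_W:
  assumes "0 \<le> R" "x \<le> R\<^sup>2" "n \<ge> 1" "real n \<le> x" "chi 1 = 1"
  shows "mangoldt n \<le> lambda'_W chi R n + (if n \<in> small_prime_powers R x then ln x else 0)"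
proof -
  have lambda'_W: "lambda'_W chi R n = (if prime n \<and> R < real n then ln (real n) else 0)"
    using assms by (intro lambda'_W_below_square) auto
  have "ln x \<ge> 0" "lambda'_W chi R n \<ge> 0"
    using assms(3,4) by (auto simp: lambda'_W)
  show ?thesis
  proof (cases "primepow n")
    case False
    then show ?thesis
      using \<open>ln x \<ge> 0\<close> \<open>lambda'_W chi R n \<ge> 0\<close> by (simp add: mangoldt_def)
  next
    case True
    then obtain p k where pk: "prime p" "k > 0" "n = p ^ k"
      by (auto simp: primepow_def)
    have "p \<ge> 2"
      using pk(1) prime_ge_2_nat by blast
    show ?thesis
    proof (cases "R < real p")
      case True
      have "k = 1"
        using pk assms True by (intro prime_power_le_square_exponent_eq_1) auto
      then show ?thesis
        using pk True \<open>ln x \<ge> 0\<close> lambda'_W by simp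
    next
      case False
      then have "real p \<le> R"
        by simp
      moreover have "real (p ^ k) \<le> x"
        using pk(3) assms(4) by simp
      ultimately have "n \<in> small_prime_powers R x"
        using pk unfolding small_prime_powers_def by blast
      moreover have "ln (real p) \<le> ln x"
      proof -
        have "p \<le> n"
          using pk \<open>p \<ge> 2\<close> by (simp add: self_le_power)
        then show ?thesis
          using assms(4) \<open>p \<ge> 2\<close> by simp
      qed
      ultimately show ?thesis
        using pk \<open>lambda'_W chi R n \<ge> 0\<close> by simp
    qed
  qed
qed

lemma small_prime_powers_subset_image:
  "small_prime_powers R x \<subseteq>
     (\<lambda>(p, k). p ^ k) ` ({1..nat \<lfloor>R\<rfloor>} \<times> {1..nat \<lfloor>log 2 x\<rfloor>})"
proof
  fix n assume "n \<in> small_prime_powers R x"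
  then obtain p k where pk: "prime p" "k > 0" "real p \<le> R" "real (p ^ k) \<le> x" "n = p ^ k"
    by (auto simp: small_prime_powers_def)
  have "(2::nat) ^ k \<le> p ^ k"
    using pk(1) prime_ge_2_nat by (intro power_mono) auto
  have "2 powr real k = real ((2::nat) ^ k)"
    by (simp add: powr_realpow)
  also have "\<dots> \<le> real (p ^ k)"
    using \<open>2 ^ k \<le> p ^ k\<close> by (simp only: of_nat_le_iff)
  also have "\<dots> \<le> x"
    using pk(4) .
  finally have "2 powr real k \<le> x" .
  moreover have "0 < x"
    by (rule less_le_trans[OF _ \<open>2 powr real k \<le> x\<close>]) simp
  ultimately have "real k \<le> log 2 x"
    by (simp add: le_log_iff)
  then have "k \<le> nat \<lfloor>log 2 x\<rfloor>" "p \<le> nat \<lfloor>R\<rfloor>"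
    using pk(3) by (simp_all add: le_nat_floor)
  then show "n \<in> (\<lambda>(p, k). p ^ k) ` ({1..nat \<lfloor>R\<rfloor>} \<times> {1..nat \<lfloor>log 2 x\<rfloor>})"
    using pk prime_ge_1_nat by (auto intro!: image_eqI[of _ _ "(p, k)"])
qed

lemma card_small_prime_powers_le:
  assumes "0 \<le> R" "1 \<le> x"
  shows "finite (small_prime_powers R x)"
    and "real (card (small_prime_powers R x)) \<le> R * log 2 x"
proof -
  let ?grid = "{1..nat \<lfloor>R\<rfloor>} \<times> {1..nat \<lfloor>log 2 x\<rfloor>}"
  have sub: "small_prime_powers R x \<subseteq> (\<lambda>(p, k). p ^ k) ` ?grid"
    by (rule small_prime_powers_subset_image)
  then show "finite (small_prime_powers R x)"
    by (rule finite_subset) auto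
  have "card (small_prime_powers R x) \<le> card ((\<lambda>(p, k). p ^ k) ` ?grid)"
    using sub by (intro card_mono) auto
  also have "\<dots> \<le> card ?grid"
    by (rule card_image_le) auto
  finally have "card (small_prime_powers R x) \<le> card ?grid" .
  then have "real (card (small_prime_powers R x)) \<le> real (nat \<lfloor>R\<rfloor>) * real (nat \<lfloor>log 2 x\<rfloor>)"
    by (simp flip: of_nat_mult)
  also have "\<dots> \<le> R * log 2 x"
    using assms by (intro mult_mono) auto
  finally show "real (card (small_prime_powers R x)) \<le> R * log 2 x" .
qed

lemma sum_mangoldt_le_sum_lambda'_W:
  assumes S: "\<And>n. n \<in> S \<Longrightarrow> 1 \<le> n \<and> real n \<le> x"
    and "0 \<le> R" "x \<le> R\<^sup>2" "1 \<le> x" "chi 1 = 1"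
  shows "(\<Sum>n\<in>S. mangoldt n) \<le> (\<Sum>n\<in>S. lambda'_W chi R n) + R * log 2 x * ln x"
proof -
  let ?B = "small_prime_powers R x"
  have "finite S"
    by (rule finite_subset[of S "{..nat \<lfloor>x\<rfloor>}"]) (auto dest: S simp: le_nat_floor)
  have "(\<Sum>n\<in>S. mangoldt n) \<le> (\<Sum>n\<in>S. lambda'_W chi R n + (if n \<in> ?B then ln x else 0))"
    using assms by (intro sum_mono mangoldt_le_lambda'_W) auto
  also have "\<dots> = (\<Sum>n\<in>S. lambda'_W chi R n) + real (card (S \<inter> ?B)) * ln x"
    using \<open>finite S\<close> by (simp add: sum.distrib flip: sum.inter_restrict)
  also have "real (card (S \<inter> ?B)) \<le> real (card ?B)"
    using card_small_prime_powers_le(1)[OF assms(2,4)] by (simp add: card_mono)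
  also have "\<dots> \<le> R * log 2 x"
    using assms(2,4) by (rule card_small_prime_powers_le(2))
  finally show ?thesis
    using assms(4) by (simp add: mult_right_mono)
qed

lemma log_2_le_twice_ln:
  assumes "1 \<le> x"
  shows "log 2 x \<le> 2 * ln x"
proof -
  have "1 * ln x \<le> (2 * ln 2) * ln x"
    using assms ln2_ge_two_thirds by (intro mult_right_mono) auto
  moreover have "0 < ln (2::real)"
    by simp
  ultimately show ?thesis
    by (simp add: log_def pos_divide_le_eq algebra_simps)
qed

theorem mainTheorem8:
  "\<exists>C>0. \<forall>(c::real) D chi (q::nat) (a::int) (x::real).
      c > 0 \<longrightarrow> exceptional c D chi \<longrightarrow> q \<ge> 1 \<longrightarrow> coprime a (int q) \<longrightarrow> x \<ge> 2 \<longrightarrow>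
      psi_ap x q a \<le> S'_W chi D x q a + C * R_param D x * (ln x)^2"
proof (intro exI[of _ 2] conjI allI impI)
  fix c :: real and D chi and q :: nat and a :: int and x :: real
  assume "exceptional c D chi" and "x \<ge> 2"
  then have "real_dirichlet_char D chi" "nonprincipal D chi"
    by (simp_all add: exceptional_def)
  then have "D \<ge> 2"
    by (rule real_dirichlet_char_modulus_ge_2)
  have "chi 1 = 1"
    using \<open>real_dirichlet_char D chi\<close> by (simp add: real_dirichlet_char_def)
  define R where "R = R_param D x"
  have "x \<le> R\<^sup>2" "0 \<le> R"
    using le_R_param_squared[OF \<open>D \<ge> 2\<close>, of x] R_param_ge_32[OF \<open>D \<ge> 2\<close>, of x]
    by (simp_all add: R_def)
  have "psi_ap x q a \<le> S'_W chi D x q a + R * log 2 x * ln x"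
    unfolding psi_ap_def S'_W_def R_def[symmetric]
    using \<open>x \<le> R\<^sup>2\<close> \<open>0 \<le> R\<close> \<open>x \<ge> 2\<close> \<open>chi 1 = 1\<close> by (intro sum_mangoldt_le_sum_lambda'_W) auto
  also have "R * log 2 x * ln x \<le> R * (2 * ln x) * ln x"
    using \<open>x \<ge> 2\<close> \<open>0 \<le> R\<close> log_2_le_twice_ln[of x] by (intro mult_right_mono mult_left_mono) auto
  finally show "psi_ap x q a \<le> S'_W chi D x q a + 2 * R_param D x * (ln x)\<^sup>2"
    by (simp add: R_def power2_eq_square algebra_simps)
qed simp

end
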